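(* Let $G=(N,\Sigma,R,S)$ be a linear context-free grammar and fix any total order on $R$. Then $\Phi_3(G)$ is a test set for $L(G)$, and for every $k\ge 0$ the set $\Phi_k(G)$ contains at most $\sum_{i=0}^k |R|^i$ words.
   Context: A context-free grammar is $G=(N,\Sigma,R,S)$ with non-terminals $N$, terminals $\Sigma$, productions $R\subseteq N\times(N\uplus\Sigma)^*$, start symbol $S$; $L(G)$ is its language. $G$ is linear if every right-hand side has at most one non-terminal occurrence. A morphism $f:\Sigma^*\to\Gamma^*$ satisfies $f(\epsilon)=\epsilon$, $f(uv)=f(u)f(v)$. $T\subseteq L$ is a test set for $L$ if for every alphabet $\Gamma$ and morphisms $f,g:\Sigma^*\to\Gamma^*$ agreeing on all words of $T$, $f$ and $g$ agree on all words of $L$. Graph of $G$: vertices $N\uplus\{\bot\}$; for each rule $r = A\to uBv$ with $B\in N$, $u,v\in\Sigma^*$ there is an edge $(A,r,B)$ with $\overleftarrow{r}=u$, $\overrightarrow{r}=v$; for each rule $r=A\to u$ with $u\in\Sigma^*$ there is an edge $(A,r,\bot)$ with $\overleftarrow{r}=u$, $\overrightarrow{r}=\epsilon$. A path is a sequence of consecutive edges $(A_1,r_1,A_2)(A_2,r_2,A_3)\cdots(A_n,r_n,A_{n+1})$ (the empty path from a vertex to itself is allowed); it is accepting if $A_1=S$ and $A_{n+1}=\bot$, and then it corresponds to the word $\overleftarrow{r_1}\cdots\overleftarrow{r_n}\,\overrightarrow{r_n}\cdots\overrightarrow{r_1}\in L(G)$. Paths are identified with their rule sequences in $R^*$ and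 ordered by: $P_1<P_2$ iff $|P_1|<|P_2|$, or $|P_1|=|P_2|$ and $P_1$ is lexicographically smaller w.r.t. the fixed total order on $R$. A path is optimal if it is the $<$-minimal path among all paths from its first vertex to its last vertex. $\Phi_k(G)$ is the set of words corresponding to accepting paths of the form $P_1e_1P_2e_2\cdots P_ne_nP_{n+1}$ with $n\le k$, each $e_i$ a single edge, each $P_i$ ($1\le i\le n+1$) optimal, and each $P_ie_i$ ($1\le i\le n$) not optimal. *)

theory Defs
  imports Main
begin

datatype ('n, 't) sym = Nt 'n | Tm 't

fun isTm :: "('n, 't) sym \<Rightarrow> bool" where
  "isTm (Tm _) = True" | "isTm (Nt _) = False"

fun isNt :: "('n, 't) sym \<Rightarrow> bool" where
  "isNt (Nt _) = True" | "isNt (Tm _) = False"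

fun unTm :: "('n, 't) sym \<Rightarrow> 't" where
  "unTm (Tm a) = a" | "unTm (Nt _) = undefined"

fun unNt :: "('n, 't) sym \<Rightarrow> 'n" where
  "unNt (Nt A) = A" | "unNt (Tm _) = undefined"

type_synonym ('n, 't) rule = "'n \<times> ('n, 't) sym list"

definition cfg :: "'n set \<Rightarrow> 't set \<Rightarrow> ('n, 't) rule set \<Rightarrow> 'n \<Rightarrow> bool" where
  "cfg N \<Sigma> R S \<longleftrightarrow> finite N \<and> finite \<Sigma> \<and> finite R \<and> S \<in> N \<and>
     R \<subseteq> N \<times> lists (Nt ` N \<union> Tm ` \<Sigma>)"

definition linear_grammar :: "('n, 't) rule set \<Rightarrow> bool" where
  "linear_grammar R \<longleftrightarrow> (\<forall>(A, \<alpha>) \<in> R. length (filter isNt \<alpha>) \<le> 1)"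

definition derives1 :: "('n, 't) rule set \<Rightarrow> ('n, 't) sym list \<Rightarrow> ('n, 't) sym list \<Rightarrow> bool" where
  "derives1 R u v \<longleftrightarrow> (\<exists>x y A \<alpha>. u = x @ [Nt A] @ y \<and> v = x @ \<alpha> @ y \<and> (A, \<alpha>) \<in> R)"

definition Lang :: "('n, 't) rule set \<Rightarrow> 'n \<Rightarrow> 't list set" where
  "Lang R S = {w. (derives1 R)\<^sup>*\<^sup>* [Nt S] (map Tm w)}"

definition morphism_on :: "'t set \<Rightarrow> ('t list \<Rightarrow> 'g list) \<Rightarrow> bool" where
  "morphism_on \<Sigma> f \<longleftrightarrow> f [] = [] \<and> (\<forall>u \<in> lists \<Sigma>. \<forall>v \<in> lists \<Sigma>. f (u @ v) = f u @ f v)"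

text \<open>T is a test set for L (over alphabet Sigma), w.r.t. morphisms into 'g lists.
  The theorem is stated with 'g a free type variable, i.e. for every alphabet Gamma.\<close>
definition test_set :: "'g itself \<Rightarrow> 't set \<Rightarrow> 't list set \<Rightarrow> 't list set \<Rightarrow> bool" where
  "test_set _ \<Sigma> T L \<longleftrightarrow> T \<subseteq> L \<and>
     (\<forall>f g :: 't list \<Rightarrow> 'g list. morphism_on \<Sigma> f \<and> morphism_on \<Sigma> g \<and> (\<forall>w \<in> T. f w = g w)
        \<longrightarrow> (\<forall>w \<in> L. f w = g w))"

text \<open>Vertices are 'n option; None is the extra vertex bottom.\<close>

definition rtgt :: "('n, 't) rule \<Rightarrow> 'n option" where
  "rtgt r = (case dropWhile isTm (snd r) of [] \<Rightarrow> None | X # _ \<Rightarrow> Some (unNt X))"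

definition rleft :: "('n, 't) rule \<Rightarrow> 't list" where
  "rleft r = map unTm (takeWhile isTm (snd r))"

definition rright :: "('n, 't) rule \<Rightarrow> 't list" where
  "rright r = map unTm (drop 1 (dropWhile isTm (snd r)))"

fun is_path :: "('n, 't) rule set \<Rightarrow> 'n option \<Rightarrow> ('n, 't) rule list \<Rightarrow> 'n option \<Rightarrow> bool" where
  "is_path R X [] Y \<longleftrightarrow> X = Y"
| "is_path R X (r # rs) Y \<longleftrightarrow> r \<in> R \<and> X = Some (fst r) \<and> is_path R (rtgt r) rs Y"

definition path_word :: "('n, 't) rule list \<Rightarrow> 't list" where
  "path_word P = concat (map rleft P) @ concat (rev (map rright P))"

definition path_less :: "(('n, 't) rule \<times> ('n, 't) rule) set \<Rightarrow> ('n, 't) rule list \<Rightarrow> ('n, 't) rule list \<Rightarrow> bool" where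
  "path_less lt P1 P2 \<longleftrightarrow> length P1 < length P2 \<or> (length P1 = length P2 \<and> (P1, P2) \<in> lexord lt)"

definition optimal :: "('n, 't) rule set \<Rightarrow> (('n, 't) rule \<times> ('n, 't) rule) set \<Rightarrow> ('n, 't) rule list \<Rightarrow> bool" where
  "optimal R lt P \<longleftrightarrow> (\<exists>X Y. is_path R X P Y \<and> (\<forall>P'. is_path R X P' Y \<longrightarrow> \<not> path_less lt P' P))"

definition Phi :: "('n, 't) rule set \<Rightarrow> (('n, 't) rule \<times> ('n, 't) rule) set \<Rightarrow> 'n \<Rightarrow> nat \<Rightarrow> 't list set" where
  "Phi R lt S k = {path_word P | P Ps es.
      length es \<le> k \<and> length Ps = Suc (length es) \<and>
      P = concat (map2 (\<lambda>p e. p @ [e]) (butlast Ps) es) @ last Ps \<and>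
      is_path R (Some S) P None \<and>
      (\<forall>p \<in> set Ps. optimal R lt p) \<and>
      (\<forall>i < length es. \<not> optimal R lt (Ps ! i @ [es ! i]))}"

end

theory Submission
  imports Defs
begin

text \<open>Words of L(G) are the words of accepting paths, and every path splits into optimal segments
  joined by the single edges at which optimality fails. If a path has four or more such edges, each
  of the first four non-optimal segments can be replaced by a shortlex-smaller parallel path, and
  the fifteen nonempty combinations of replacements give smaller accepting paths. Embedded into the
  free group, the sixteen equations f(w) = g(w) form a four-dimensional cube, and commutation
  transitivity in free groups forces the missing corner. Well-founded induction on the shortlex
  order thus reduces agreement on L(G) to agreement on Phi 3. For the bound, optimal paths are
  unique, so a word of Phi k is determined by its at most k connecting edges.\<close>

section \<open>Free groups\<close>

text \<open>A letter (a, True) stands for the generator a, and (a, False) for its inverse.\<close>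

definition inv_letter :: "'a \<times> bool \<Rightarrow> 'a \<times> bool" where
  "inv_letter x = (fst x, \<not> snd x)"

lemma inv_letter_inv_letter [simp]: "inv_letter (inv_letter x) = x"
  by (simp add: inv_letter_def)

lemma inv_letter_neq [simp]: "inv_letter x \<noteq> x" "x \<noteq> inv_letter x"
  by (auto simp: inv_letter_def prod_eq_iff)

fun reduced :: "('a \<times> bool) list \<Rightarrow> bool" where
  "reduced (x # y # zs) \<longleftrightarrow> y \<noteq> inv_letter x \<and> reduced (y # zs)"
| "reduced _ \<longleftrightarrow> True"

fun cons_reduce :: "'a \<times> bool \<Rightarrow> ('a \<times> bool) list \<Rightarrow> ('a \<times> bool) list" where
  "cons_reduce x [] = [x]"
| "cons_reduce x (y # ys) = (if y = inv_letter x then ys else x # y # ys)"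

fun reduce :: "('a \<times> bool) list \<Rightarrow> ('a \<times> bool) list" where
  "reduce [] = []"
| "reduce (x # xs) = cons_reduce x (reduce xs)"

definition inv_word :: "('a \<times> bool) list \<Rightarrow> ('a \<times> bool) list" where
  "inv_word xs = rev (map inv_letter xs)"

lemma inv_word_inv_word [simp]: "inv_word (inv_word xs) = xs"
  by (simp add: inv_word_def rev_map comp_def)

lemma inv_word_Nil [simp]: "inv_word [] = []"
  and inv_word_Cons: "inv_word (x # xs) = inv_word xs @ [inv_letter x]"
  by (simp_all add: inv_word_def)

lemma hd_inv_word: "xs \<noteq> [] \<Longrightarrow> hd (inv_word xs) = inv_letter (last xs)"
  by (simp add: inv_word_def hd_rev last_map)

lemma last_inv_word: "xs \<noteq> [] \<Longrightarrow> last (inv_word xs) = inv_letter (hd xs)"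
  by (simp add: inv_word_def last_rev hd_map)

lemma reduced_tl: "reduced (x # xs) \<Longrightarrow> reduced xs"
  by (cases xs) auto

lemma reduced_append:
  "reduced (xs @ ys) \<longleftrightarrow>
     reduced xs \<and> reduced ys \<and> (xs = [] \<or> ys = [] \<or> hd ys \<noteq> inv_letter (last xs))"
  by (induct xs) (auto simp: neq_Nil_conv elim: reduced.elims)

lemma reduced_inv_word: "reduced xs \<Longrightarrow> reduced (inv_word xs)"
  by (induct xs) (auto simp: inv_word_Cons reduced_append hd_inv_word dest: reduced_tl
      elim: reduced.elims)

lemma reduced_cons_reduce: "reduced ys \<Longrightarrow> reduced (cons_reduce x ys)"
  by (cases ys) (auto dest: reduced_tl)

lemma reduced_reduce: "reduced (reduce xs)"
  by (induct xs) (auto intro: reduced_cons_reduce)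

lemma reduce_reduced: "reduced xs \<Longrightarrow> reduce xs = xs"
  by (induct xs rule: reduced.induct) auto

lemma cons_reduce_cancel: "reduced ys \<Longrightarrow> cons_reduce x (cons_reduce (inv_letter x) ys) = ys"
  by (cases ys rule: reduced.cases) auto

lemma reduce_append: "reduce (xs @ ys) = foldr cons_reduce xs (reduce ys)"
  by (induct xs) auto

lemma foldr_cons_reduce_cons_reduce:
  assumes "reduced s"
  shows "foldr cons_reduce (cons_reduce x w) s = cons_reduce x (foldr cons_reduce w s)"
proof (cases w)
  case (Cons y w')
  have "reduced (foldr cons_reduce w' s)"
    using assms by (induct w') (auto intro: reduced_cons_reduce)
  then show ?thesis
    using Cons cons_reduce_cancel[of "foldr cons_reduce w' s" x] by auto
qed simp

lemma foldr_cons_reduce_reduce: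
  "reduced s \<Longrightarrow> foldr cons_reduce (reduce xs) s = foldr cons_reduce xs s"
  by (induct xs) (auto simp: foldr_cons_reduce_cons_reduce)

lemma reduce_append_reduce_left: "reduce (reduce xs @ ys) = reduce (xs @ ys)"
  by (simp add: reduce_append foldr_cons_reduce_reduce reduced_reduce)

lemma reduce_append_reduce_right: "reduce (xs @ reduce ys) = reduce (xs @ ys)"
  by (simp add: reduce_append reduce_reduced reduced_reduce)

lemma reduce_inv_word_append: "reduce (inv_word xs @ xs) = []"
proof (induct xs)
  case (Cons x xs)
  have "reduce (inv_word (x # xs) @ x # xs) = reduce (inv_word xs @ (inv_letter x # x # xs))"
    by (simp add: inv_word_Cons)
  also have "\<dots> = reduce (inv_word xs @ reduce (inv_letter x # x # xs))"
    by (rule reduce_append_reduce_right[symmetric])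
  also have "reduce (inv_letter x # x # xs) = reduce xs"
    using cons_reduce_cancel[OF reduced_reduce, of "inv_letter x" xs] by simp
  finally show ?case
    using Cons by (simp add: reduce_append_reduce_right)
qed simp

lemma length_reduce: "length (reduce xs) \<le> length xs"
proof (induct xs)
  case (Cons x xs)
  then show ?case by (cases "reduce xs") auto
qed simp

lemma reduce_eq_if_length_eq: "length (reduce xs) = length xs \<Longrightarrow> reduce xs = xs"
proof (induct xs)
  case (Cons x xs)
  have "length (reduce xs) = length xs"
    using Cons.prems length_reduce[of xs] by (cases "reduce xs") (auto split: if_splits)
  then show ?case
    using Cons by (cases xs) (auto split: if_splits)
qed simp

lemma length_reduce_less: "\<not> reduced xs \<Longrightarrow> length (reduce xs) < length xs"
  using reduce_eq_if_length_eq[of xs] length_reduce[of xs] reduced_reduce[of xs]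
  by fastforce

typedef 'a free_group = "{xs :: ('a \<times> bool) list. reduced xs}"
  morphisms word_of Abs_free_group
  by (rule exI[of _ "[]"]) simp

setup_lifting type_definition_free_group

instantiation free_group :: (type) group_add
begin

lift_definition zero_free_group :: "'a free_group" is "[]"
  by simp

lift_definition plus_free_group :: "'a free_group \<Rightarrow> 'a free_group \<Rightarrow> 'a free_group"
  is "\<lambda>xs ys. reduce (xs @ ys)"
  by (rule reduced_reduce)

lift_definition uminus_free_group :: "'a free_group \<Rightarrow> 'a free_group" is inv_word
  by (rule reduced_inv_word)

definition minus_free_group :: "'a free_group \<Rightarrow> 'a free_group \<Rightarrow> 'a free_group" where
  "minus_free_group x y = x + - y"

instance
proof
  fix a b c :: "'a free_group"
  show "a + b + c = a + (b + c)"
    by transfer (simp add: reduce_append_reduce_left reduce_append_reduce_right)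
  show "0 + a = a" "a + 0 = a"
    by (transfer, simp add: reduce_reduced)+
  show "- a + a = 0"
    by transfer (rule reduce_inv_word_append)
  show "a + - b = a - b"
    by (simp add: minus_free_group_def)
qed

end

lemma reduced_word_of: "reduced (word_of x)"
  using word_of by auto

lemma word_of_zero: "word_of 0 = []"
  by transfer simp

lemma Abs_free_group_plus:
  "reduced xs \<Longrightarrow> reduced ys \<Longrightarrow> Abs_free_group xs + Abs_free_group ys = Abs_free_group (reduce (xs @ ys))"
  by (simp add: word_of_inject[symmetric] plus_free_group.rep_eq Abs_free_group_inverse reduced_reduce)

lemma Abs_free_group_uminus: "reduced xs \<Longrightarrow> - Abs_free_group xs = Abs_free_group (inv_word xs)"
  by (simp add: word_of_inject[symmetric] uminus_free_group.rep_eq Abs_free_group_inverse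
      reduced_inv_word)

definition word_pow :: "'a list \<Rightarrow> nat \<Rightarrow> 'a list" where
  "word_pow x n = concat (replicate n x)"

lemma word_pow_0 [simp]: "word_pow x 0 = []"
  and word_pow_Suc: "word_pow x (Suc n) = x @ word_pow x n"
  by (simp_all add: word_pow_def)

lemma word_pow_add: "word_pow x (m + n) = word_pow x m @ word_pow x n"
  by (simp add: word_pow_def replicate_add)

lemma word_pow_mult: "word_pow x (m * n) = word_pow (word_pow x m) n"
  by (induct n) (simp_all add: word_pow_Suc word_pow_add)

lemma length_word_pow [simp]: "length (word_pow x n) = n * length x"
  by (simp add: word_pow_def length_concat sum_list_replicate)

lemma nth_word_pow: "i < n * length x \<Longrightarrow> word_pow x n ! i = x ! (i mod length x)"
proof (induct n arbitrary: i)
  case (Suc n)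
  show ?case
  proof (cases "i < length x")
    case False
    then have "word_pow x n ! (i - length x) = x ! ((i - length x) mod length x)"
      using Suc by (intro Suc.hyps) auto
    then show ?thesis
      using False by (simp add: word_pow_Suc nth_append le_mod_geq)
  qed (simp add: word_pow_Suc nth_append)
qed simp

lemma append_word_pow_commute: "x @ y = y @ x \<Longrightarrow> x @ word_pow y n = word_pow y n @ x"
  by (induct n) (simp_all add: word_pow_Suc, metis append_assoc)

lemma word_pow_length_eq_if_commute:
  assumes "x @ y = y @ x"
  shows "word_pow x (length y) = word_pow y (length x)"
proof -
  have "word_pow y (length x) @ x = x @ word_pow y (length x)"
    by (rule append_word_pow_commute[OF assms, symmetric])
  then have "word_pow y (length x) @ word_pow x (length y) = word_pow x (length y) @ word_pow y (length x)"
    by (rule append_word_pow_commute)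
  moreover have "length (word_pow x (length y)) = length (word_pow y (length x))"
    by simp
  ultimately show ?thesis
    by (metis append_eq_append_conv)
qed

lemma commute_if_word_pow_eq:
  assumes x: "x \<noteq> []" and y: "y \<noteq> []" and eq: "word_pow x j = word_pow y k" and j: "j > 0"
  shows "x @ y = y @ x"
proof -
  define L where "L = j * length x"
  have L: "L = k * length y"
    using arg_cong[OF eq, of length] by (simp add: L_def)
  have L_pos: "L > 0"
    using x j by (simp add: L_def)
  have period: "x ! (i mod length x) = y ! (i mod length y)" for i
  proof -
    have "x ! (i mod length x) = word_pow x j ! (i mod L)"
      using L_pos by (simp add: nth_word_pow L_def mod_mod_cancel)
    also have "\<dots> = y ! (i mod length y)"
      using L L_pos by (simp add: eq nth_word_pow mod_mod_cancel)
    finally show ?thesis .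
  qed
  have "(x @ y) ! i = x ! (i mod length x)" if "i < length x + length y" for i
  proof (cases "i < length x")
    case False
    then have "(x @ y) ! i = x ! ((i - length x) mod length x)"
      using that by (simp add: nth_append period)
    then show ?thesis
      using False by (simp add: le_mod_geq)
  qed (simp add: nth_append)
  moreover have "(y @ x) ! i = x ! (i mod length x)" if "i < length x + length y" for i
  proof (cases "i < length y")
    case False
    then have "(y @ x) ! i = y ! ((i - length y) mod length y)"
      using that period[of "i - length y"] by (simp add: nth_append)
    then show ?thesis
      using False by (simp add: le_mod_geq period)
  qed (simp add: nth_append period)
  ultimately have "(x @ y) ! i = (y @ x) ! i" if "i < length x + length y" for i
    using that by simp
  then show ?thesis
    by (intro nth_equalityI) auto
qed

lemma append_commute_trans:
  assumes "x @ y = y @ x" "y @ z = z @ y" "y \<noteq> []"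
  shows "x @ z = z @ x"
proof (cases "x = [] \<or> z = []")
  case False
  have "word_pow x (length y * length z) = word_pow y (length x * length z)"
    by (simp add: word_pow_mult word_pow_length_eq_if_commute[OF assms(1)])
  also have "\<dots> = word_pow z (length y * length x)"
    by (simp add: mult.commute[of "length x"] word_pow_mult word_pow_length_eq_if_commute[OF assms(2)])
  finally show ?thesis
    using False assms(3) by (intro commute_if_word_pow_eq) auto
qed auto

definition commute :: "'a::group_add \<Rightarrow> 'a \<Rightarrow> bool" where
  "commute x y \<longleftrightarrow> x + y = y + x"

lemma commute_sym: "commute x y \<Longrightarrow> commute y x"
  by (simp add: commute_def)

lemma commute_conj_iff: "commute (- u + x + u) (- u + y + u) \<longleftrightarrow> commute x y"
proof -
  have "(- u + x + u) + (- u + y + u) = - u + (x + y) + u"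
    and "(- u + y + u) + (- u + x + u) = - u + (y + x) + u"
    by (simp_all add: add.assoc)
  then show ?thesis
    by (simp only: commute_def add_right_cancel add_left_cancel)
qed

lemma commute_uminus_left_iff: "commute (- x) y \<longleftrightarrow> commute x y"
  unfolding commute_def
proof
  assume "- x + y = y + - x"
  then have "x + (- x + y) + x = x + (y + - x) + x"
    by simp
  then show "x + y = y + x"
    by (simp add: add.assoc)
next
  assume "x + y = y + x"
  then have "- x + (x + y) + - x = - x + (y + x) + - x"
    by simp
  then show "- x + y = y + - x"
    by (simp add: add.assoc del: add_uminus_conv_diff)
qed

definition cyclically_reduced :: "('a \<times> bool) list \<Rightarrow> bool" where
  "cyclically_reduced t \<longleftrightarrow> reduced t \<and> t \<noteq> [] \<and> hd t \<noteq> inv_letter (last t)"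

lemma reduced_eq_conj_cyclically_reduced:
  "reduced b \<Longrightarrow> b \<noteq> [] \<Longrightarrow> \<exists>u t. b = u @ t @ inv_word u \<and> cyclically_reduced t"
proof (induct "length b" arbitrary: b rule: less_induct)
  case less
  show ?case
  proof (cases "hd b = inv_letter (last b)")
    case False
    then show ?thesis
      using less.prems by (intro exI[of _ "[]"] exI[of _ b]) (auto simp: cyclically_reduced_def)
  next
    case True
    obtain x b1 where b1: "b = x # b1"
      using less.prems by (cases b) auto
    then have "b1 \<noteq> []"
      using True by auto
    then obtain b' y where b: "b = x # b' @ [y]"
      using b1 by (cases b1 rule: rev_cases) auto
    have y: "y = inv_letter x"
      using True b by simp
    have "reduced (b' @ [y])"
      using less.prems(1) b by (auto dest: reduced_tl)
    then have "reduced b'"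
      by (simp add: reduced_append)
    moreover have "b' \<noteq> []"
      using less.prems(1) b y by auto
    ultimately
    obtain u t where "b' = u @ t @ inv_word u" "cyclically_reduced t"
      using less.hyps[of b'] b by auto
    then show ?thesis
      using b y by (intro exI[of _ "x # u"] exI[of _ t]) (simp add: inv_word_Cons)
  qed
qed

text \<open>One of the products a t and a\<inverse> t of reduced words involves no cancellation at all;
  equal lengths of the reduced forms of a t and t a then force both sides to be cancellation-free.\<close>
lemma commute_cyclically_reduced_words:
  assumes t: "cyclically_reduced t" and a: "reduced a"
    and c: "commute (Abs_free_group a) (Abs_free_group t)"
  shows "a @ t = t @ a \<or> inv_word a @ t = t @ inv_word a"
proof -
  have t': "reduced t" "t \<noteq> []" "hd t \<noteq> inv_letter (last t)"
    using t by (simp_all add: cyclically_reduced_def)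
  have eq: "reduce (a @ t) = reduce (t @ a)"
    using c t' a by (simp add: commute_def Abs_free_group_plus Abs_free_group_inject reduced_reduce)
  have same_length: "length (reduce (a @ t)) = length (reduce (t @ a))"
    using eq by simp
  have at: "reduced (a @ t) \<longleftrightarrow> a = [] \<or> hd t \<noteq> inv_letter (last a)"
    and ta: "reduced (t @ a) \<longleftrightarrow> a = [] \<or> hd a \<noteq> inv_letter (last t)"
    using t' a by (auto simp: reduced_append)
  show ?thesis
  proof (cases "reduced (a @ t)")
    case True
    then have "reduced (t @ a)"
      using same_length length_reduce_less[of "t @ a"] by (auto simp: reduce_reduced)
    then show ?thesis
      using True eq by (simp add: reduce_reduced)
  next
    case False
    then have "\<not> reduced (t @ a)"
      using same_length length_reduce_less[of "a @ t"] by (auto simp: reduce_reduced)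
    then have "reduced (inv_word a @ t)" "reduced (t @ inv_word a)"
      using False at ta t' a
      by (auto simp: reduced_append reduced_inv_word hd_inv_word last_inv_word)
    moreover have "commute (Abs_free_group (inv_word a)) (Abs_free_group t)"
      using c a by (simp add: commute_uminus_left_iff flip: Abs_free_group_uminus)
    then have "reduce (inv_word a @ t) = reduce (t @ inv_word a)"
      using t' a by (simp add: commute_def Abs_free_group_plus Abs_free_group_inject reduced_reduce
          reduced_inv_word)
    ultimately show ?thesis
      by (simp add: reduce_reduced)
  qed
qed

lemma commute_cyclically_reduced_cases:
  assumes "cyclically_reduced t" "commute x (Abs_free_group t)"
  obtains w where "reduced w" "x = Abs_free_group w \<or> x = - Abs_free_group w" "w @ t = t @ w"
proof -
  have x: "x = Abs_free_group (word_of x)" "x = - Abs_free_group (inv_word (word_of x))"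
    by (simp_all add: word_of_inverse Abs_free_group_uminus reduced_inv_word reduced_word_of)
  show ?thesis
    using commute_cyclically_reduced_words[OF assms(1) reduced_word_of, of x] assms(2) that x
      reduced_word_of[of x] reduced_inv_word[OF reduced_word_of, of x]
    by (metis word_of_inverse)
qed

text \<open>Conjugate b to a cyclically reduced word t: everything commuting with t is, up to
  inversion, a word commuting with t, and commutation of nonempty words is transitive.\<close>
theorem commute_trans:
  fixes a b c :: "'a free_group"
  assumes "b \<noteq> 0" "commute a b" "commute c b"
  shows "commute a c"
proof -
  have "reduced (word_of b)" "word_of b \<noteq> []"
    using assms(1) reduced_word_of word_of_zero word_of_inject by metis+
  then obtain u t where ut: "word_of b = u @ t @ inv_word u" "cyclically_reduced t"
    using reduced_eq_conj_cyclically_reduced by blast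
  have u: "reduced u"
    using reduced_word_of[of b] ut(1) by (simp add: reduced_append)
  have t: "reduced t" "t \<noteq> []"
    using ut(2) by (simp_all add: cyclically_reduced_def)
  have "Abs_free_group (word_of b) = Abs_free_group u + Abs_free_group t + - Abs_free_group u"
    using ut(1) u t reduced_word_of[of b]
    by (simp add: Abs_free_group_plus Abs_free_group_uminus reduced_reduce reduced_inv_word
        reduce_append_reduce_left reduce_reduced)
  then have tb: "Abs_free_group t = - Abs_free_group u + b + Abs_free_group u"
    by (simp add: word_of_inverse add.assoc)
  define a' where "a' = - Abs_free_group u + a + Abs_free_group u"
  define c' where "c' = - Abs_free_group u + c + Abs_free_group u"
  obtain wa where wa: "reduced wa" "a' = Abs_free_group wa \<or> a' = - Abs_free_group wa" "wa @ t = t @ wa"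
    using commute_cyclically_reduced_cases[OF ut(2)] assms(2)
    by (metis a'_def tb commute_conj_iff)
  obtain wc where wc: "reduced wc" "c' = Abs_free_group wc \<or> c' = - Abs_free_group wc" "wc @ t = t @ wc"
    using commute_cyclically_reduced_cases[OF ut(2)] assms(3)
    by (metis c'_def tb commute_conj_iff)
  have "wa @ wc = wc @ wa"
    using append_commute_trans[OF wa(3) _ t(2)] wc(3) by simp
  then have "commute (Abs_free_group wa) (Abs_free_group wc)"
    using wa(1) wc(1) by (simp add: commute_def Abs_free_group_plus)
  then have "commute a' c'"
    using wa(2) wc(2) commute_uminus_left_iff commute_sym by metis
  then show ?thesis
    by (simp add: a'_def c'_def commute_conj_iff)
qed

section \<open>A cube lemma in free groups\<close>

text \<open>An equation c + h = h + e says that h intertwines c and e, i.e. e = - h + c + h.\<close>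

lemma sandwich_eq_iff:
  fixes a b c d h k :: "'a::group_add"
  shows "a + h + b = c + k + d \<longleftrightarrow> (- c + a) + h = k + (d + - b)"
proof
  assume "a + h + b = c + k + d"
  then have "- c + (a + h + b) + - b = - c + (c + k + d) + - b"
    by simp
  then show "(- c + a) + h = k + (d + - b)"
    by (simp add: add.assoc del: add_uminus_conv_diff)
next
  assume "(- c + a) + h = k + (d + - b)"
  then have "c + ((- c + a) + h) + b = c + (k + (d + - b)) + b"
    by simp
  then show "a + h + b = c + k + d"
    by (simp add: add.assoc del: add_uminus_conv_diff)
qed

lemma intertwine_diff:
  fixes p0 p1 q0 q1 h k :: "'a::group_add"
  assumes "p0 + h = k + q0" "p1 + h = k + q1"
  shows "(- p0 + p1) + h = h + (- q0 + q1)"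
proof -
  have "k = p0 + h + - q0"
    using assms(1) by (simp add: add.assoc del: add_uminus_conv_diff)
  moreover have "- p0 + (p1 + h) = - p0 + (k + q1)"
    using assms(2) by simp
  ultimately show ?thesis
    by (simp add: add.assoc del: add_uminus_conv_diff)
qed

lemma intertwine_diff_imp:
  fixes p0 p1 q0 q1 h k :: "'a::group_add"
  assumes "p1 + h = k + q1" "(- p0 + p1) + h = h + (- q0 + q1)"
  shows "p0 + h = k + q0"
proof -
  have "p0 + ((- p0 + p1) + h) + (- q1 + q0) = p0 + (h + (- q0 + q1)) + (- q1 + q0)"
    using assms(2) by simp
  then have "p1 + h + - q1 + q0 = p0 + h"
    by (simp add: add.assoc del: add_uminus_conv_diff)
  then show ?thesis
    using assms(1) by (simp add: add.assoc del: add_uminus_conv_diff)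
qed

lemma intertwine_conj_iff:
  fixes a a' c e h :: "'a::group_add"
  shows "c + (a + h + a') = (a + h + a') + e \<longleftrightarrow> (- a + c + a) + h = h + (a' + e + - a')"
proof
  assume "c + (a + h + a') = (a + h + a') + e"
  then have "- a + (c + (a + h + a')) + - a' = - a + ((a + h + a') + e) + - a'"
    by simp
  then show "(- a + c + a) + h = h + (a' + e + - a')"
    by (simp add: add.assoc del: add_uminus_conv_diff)
next
  assume "(- a + c + a) + h = h + (a' + e + - a')"
  then have "a + ((- a + c + a) + h) + a' = a + (h + (a' + e + - a')) + a'"
    by simp
  then show "c + (a + h + a') = (a + h + a') + e"
    by (simp add: add.assoc del: add_uminus_conv_diff)
qed

lemma commute_diff_if_intertwine:
  fixes c e h h' :: "'a::group_add"
  assumes "c + h = h + e" "c + h' = h' + e"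
  shows "commute (h' + - h) c"
proof -
  have "e = - h + c + h" "e = - h' + c + h'"
    using assms by (simp_all add: add.assoc del: add_uminus_conv_diff)
  then have "h' + (- h + c + h) + - h = h' + (- h' + c + h') + - h"
    by simp
  then show ?thesis
    by (simp add: commute_def add.assoc del: add_uminus_conv_diff)
qed

lemma intertwine_if_commute_diff:
  fixes c e h0 h1 :: "'a::group_add"
  assumes "c + h1 = h1 + e" "commute (h1 + - h0) c"
  shows "c + h0 = h0 + e"
proof -
  have "- (h1 + - h0) + (c + (h1 + - h0)) + h0 = - (h1 + - h0) + ((h1 + - h0) + c) + h0"
    using assms(2) by (simp add: commute_def)
  then have "c + h0 = - (h1 + - h0) + (c + h1)"
    by (simp add: minus_add add.assoc del: add_uminus_conv_diff)
  also have "\<dots> = h0 + e"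
    using assms(1) by (simp add: minus_add add.assoc del: add_uminus_conv_diff)
  finally show ?thesis .
qed

lemma conj_eq_0_iff:
  fixes a c :: "'a::group_add"
  shows "- a + c + a = 0 \<longleftrightarrow> c = 0"
  by (metis add.left_neutral add_minus_cancel add.assoc minus_add_cancel add_left_cancel
      add.right_neutral)

text \<open>The differences of h-values commute with every c b2; commutation transitivity through
  c True \<noteq> 0 carries this over to c False, unless h is constant off the corner (False, False).\<close>
lemma intertwine_square_free_group:
  fixes c e :: "bool \<Rightarrow> 'a free_group" and h :: "bool \<Rightarrow> bool \<Rightarrow> 'a free_group"
  assumes nonzero: "c True \<noteq> 0"
    and degenerate: "h True False = h True True \<Longrightarrow> h False False = h False True"
    and corners: "\<And>b2 b3 b4. b2 \<or> b3 \<or> b4 \<Longrightarrow> c b2 + h b3 b4 = h b3 b4 + e b2"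
  shows "c False + h False False = h False False + e False"
proof -
  have "commute (h False True + - h False False) (c False)"
  proof (cases "h True False = h False True \<and> h True True = h False True")
    case True
    then have "h False True + - h False False = 0"
      using degenerate by simp
    then show ?thesis
      by (simp add: commute_def)
  next
    case False
    then obtain d4 where d: "h True d4 \<noteq> h False True"
      by auto
    let ?z = "h False True + - h True d4"
    have "?z \<noteq> 0"
      using d by simp
    moreover have "commute (c b2) ?z" for b2
      by (rule commute_sym, rule commute_diff_if_intertwine[where e = "e b2"]; rule corners) simp_all
    ultimately have "commute (c False) (c True)"
      using commute_trans by blast
    moreover have "commute (h False True + - h False False) (c True)"
      by (rule commute_diff_if_intertwine[where e = "e True"]; rule corners) simp_all
    ultimately show ?thesis
      using nonzero commute_trans commute_sym by metis
  qed
  then show ?thesis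
    by (rule intertwine_if_commute_diff[OF corners, rotated]) simp
qed

text \<open>The four layers of a 4-dimensional cube of equations in a free group: the outer layer is
  peeled off by passing to differences, the next one by conjugation, and the last two are
  handled by the square lemma.\<close>
lemma cube_free_group:
  fixes xa xb xc m yc yb ya xa' ya' :: "bool \<Rightarrow> 'a free_group"
    and k :: "bool \<Rightarrow> bool \<Rightarrow> bool \<Rightarrow> 'a free_group"
  assumes corners: "\<And>a1 a2 a3 a4. a1 \<or> a2 \<or> a3 \<or> a4 \<Longrightarrow>
    xa a1 + xb a2 + xc a3 + m a4 + yc a3 + yb a2 + ya a1 = xa' a1 + k a2 a3 a4 + ya' a1"
  shows "xa False + xb False + xc False + m False + yc False + yb False + ya False
    = xa' False + k False False False + ya' False"
proof -
  define H where "H b2 b3 b4 = xb b2 + (xc b3 + m b4 + yc b3) + yb b2" for b2 b3 b4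
  define p where "p a1 = - xa' a1 + xa a1" for a1
  define q where "q a1 = ya' a1 + - ya a1" for a1
  have E: "p a1 + H a2 a3 a4 = k a2 a3 a4 + q a1" if "a1 \<or> a2 \<or> a3 \<or> a4" for a1 a2 a3 a4
  proof -
    have "xa a1 + H a2 a3 a4 + ya a1 = xa' a1 + k a2 a3 a4 + ya' a1"
      using corners[OF that] by (simp add: H_def add.assoc)
    then show ?thesis
      unfolding p_def q_def by (rule sandwich_eq_iff[THEN iffD1])
  qed
  define c where "c = - p False + p True"
  define e where "e = - q False + q True"
  have C: "c + H b2 b3 b4 = H b2 b3 b4 + e" if "b2 \<or> b3 \<or> b4" for b2 b3 b4
    unfolding c_def e_def by (rule intertwine_diff[OF E E]) (use that in simp_all)
  have "c + H False False False = H False False False + e"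
  proof (cases "c = 0")
    case True
    have "e = - H False False True + c + H False False True"
      using C[of False False True] by (simp add: add.assoc del: add_uminus_conv_diff)
    with True show ?thesis
      by simp
  next
    case False
    define cj where "cj b2 = - xb b2 + c + xb b2" for b2
    define ej where "ej b2 = yb b2 + e + - yb b2" for b2
    have "cj True \<noteq> 0"
      using False by (simp add: cj_def conj_eq_0_iff)
    moreover have "xc False + m False + yc False = xc False + m True + yc False"
      if "xc True + m False + yc True = xc True + m True + yc True"
      using that by simp
    moreover have "cj b2 + (xc b3 + m b4 + yc b3) = (xc b3 + m b4 + yc b3) + ej b2"
      if "b2 \<or> b3 \<or> b4" for b2 b3 b4
      using C[OF that] unfolding cj_def ej_def H_def by (simp only: intertwine_conj_iff)
    ultimately have "cj False + (xc False + m False + yc False) = (xc False + m False + yc False) + ej False"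
      by (rule intertwine_square_free_group[where h = "\<lambda>b3 b4. xc b3 + m b4 + yc b3"])
    then show ?thesis
      unfolding cj_def ej_def H_def by (simp only: intertwine_conj_iff)
  qed
  then have "p False + H False False False = k False False False + q False"
    unfolding c_def e_def by (rule intertwine_diff_imp[OF E, rotated]) simp
  then have "xa False + H False False False + ya False = xa' False + k False False False + ya' False"
    unfolding p_def q_def by (rule sandwich_eq_iff[THEN iffD2])
  then show ?thesis
    by (simp add: H_def add.assoc)
qed

definition fg_of_list :: "'a list \<Rightarrow> 'a free_group" where
  "fg_of_list w = Abs_free_group (map (\<lambda>x. (x, True)) w)"

lemma reduced_map_True: "reduced (map (\<lambda>x. (x, True)) w)"
  by (induct w rule: induct_list012) (auto simp: inv_letter_def)

lemma fg_of_list_append: "fg_of_list (u @ v) = fg_of_list u + fg_of_list v"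
  using reduced_map_True[of "u @ v"]
  by (simp add: fg_of_list_def Abs_free_group_plus reduced_map_True reduce_reduced)

lemma fg_of_list_eq_iff: "fg_of_list u = fg_of_list v \<longleftrightarrow> u = v"
  by (simp add: fg_of_list_def Abs_free_group_inject reduced_map_True inj_map_eq_map inj_def)

lemma morphisms_cube:
  fixes f g :: "'t list \<Rightarrow> 'g list" and x1 x2 x3 w y3 y2 y1 :: "bool \<Rightarrow> 't list"
  defines "W \<equiv> \<lambda>a1 a2 a3 a4. x1 a1 @ x2 a2 @ x3 a3 @ w a4 @ y3 a3 @ y2 a2 @ y1 a1"
  assumes "morphism_on \<Sigma> f" "morphism_on \<Sigma> g"
    and words: "\<And>b. {x1 b, x2 b, x3 b, w b, y3 b, y2 b, y1 b} \<subseteq> lists \<Sigma>"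
    and corners: "\<And>a1 a2 a3 a4. a1 \<or> a2 \<or> a3 \<or> a4 \<Longrightarrow> f (W a1 a2 a3 a4) = g (W a1 a2 a3 a4)"
  shows "f (W False False False False) = g (W False False False False)"
proof -
  define F where "F h v = fg_of_list (h v)" for h :: "'t list \<Rightarrow> 'g list" and v
  have hom: "fg_of_list (h (W a1 a2 a3 a4)) =
      F h (x1 a1) + (F h (x2 a2) + F h (x3 a3) + F h (w a4) + F h (y3 a3) + F h (y2 a2)) + F h (y1 a1)"
    if "morphism_on \<Sigma> h" for h a1 a2 a3 a4
    using that words by (simp add: W_def F_def morphism_on_def fg_of_list_append add.assoc)
  have "F f (x1 False) + F f (x2 False) + F f (x3 False) + F f (w False) + F f (y3 False)
      + F f (y2 False) + F f (y1 False)
    = F g (x1 False) + (F g (x2 False) + F g (x3 False) + F g (w False) + F g (y3 False)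
      + F g (y2 False)) + F g (y1 False)"
  proof (rule cube_free_group[where xa = "\<lambda>b. F f (x1 b)" and xb = "\<lambda>b. F f (x2 b)"
        and xc = "\<lambda>b. F f (x3 b)" and m = "\<lambda>b. F f (w b)" and yc = "\<lambda>b. F f (y3 b)"
        and yb = "\<lambda>b. F f (y2 b)" and ya = "\<lambda>b. F f (y1 b)" and xa' = "\<lambda>b. F g (x1 b)"
        and ya' = "\<lambda>b. F g (y1 b)"
        and k = "\<lambda>a2 a3 a4. F g (x2 a2) + F g (x3 a3) + F g (w a4) + F g (y3 a3) + F g (y2 a2)"])
    fix a1 a2 a3 a4 :: bool
    assume "a1 \<or> a2 \<or> a3 \<or> a4"
    then have "fg_of_list (f (W a1 a2 a3 a4)) = fg_of_list (g (W a1 a2 a3 a4))"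
      by (simp add: corners)
    then show "F f (x1 a1) + F f (x2 a2) + F f (x3 a3) + F f (w a4) + F f (y3 a3) + F f (y2 a2)
        + F f (y1 a1)
      = F g (x1 a1) + (F g (x2 a2) + F g (x3 a3) + F g (w a4) + F g (y3 a3) + F g (y2 a2))
        + F g (y1 a1)"
      unfolding hom[OF assms(2)] hom[OF assms(3)] by (simp add: add.assoc)
  qed
  then have "fg_of_list (f (W False False False False)) = fg_of_list (g (W False False False False))"
    unfolding hom[OF assms(2)] hom[OF assms(3)] by (simp add: add.assoc)
  then show ?thesis
    by (simp add: fg_of_list_eq_iff)
qed

section \<open>Linear grammars and paths\<close>

definition vertex_syms :: "'n option \<Rightarrow> ('n, 't) sym list" where
  "vertex_syms Y = (case Y of None \<Rightarrow> [] | Some B \<Rightarrow> [Nt B])"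

lemma vertex_syms_simps [simp]: "vertex_syms None = []" "vertex_syms (Some B) = [Nt B]"
  by (simp_all add: vertex_syms_def)

lemma not_isTm_iff_isNt: "\<not> isTm x \<longleftrightarrow> isNt x"
  by (cases x) auto

lemma map_Tm_unTm: "\<forall>x \<in> set xs. isTm x \<Longrightarrow> map Tm (map unTm xs) = xs"
proof (induct xs)
  case (Cons x xs)
  then show ?case by (cases x) auto
qed simp

lemma rhs_eq_rleft_rtgt_rright:
  assumes "linear_grammar R" "r \<in> R"
  shows "snd r = map Tm (rleft r) @ vertex_syms (rtgt r) @ map Tm (rright r)"
proof -
  obtain A \<alpha> where r: "r = (A, \<alpha>)"
    by (cases r)
  have one_Nt: "length (filter isNt \<alpha>) \<le> 1"
    using assms r unfolding linear_grammar_def by auto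
  have left: "map Tm (rleft r) = takeWhile isTm \<alpha>"
    unfolding rleft_def r snd_conv by (rule map_Tm_unTm) (auto dest: set_takeWhileD)
  have "dropWhile isTm \<alpha> = vertex_syms (rtgt r) @ map Tm (rright r)"
  proof (cases "dropWhile isTm \<alpha>")
    case Nil
    then show ?thesis
      by (simp add: rtgt_def rright_def r Nil)
  next
    case (Cons X rest)
    then obtain B where X: "X = Nt B"
      using dropWhile_eq_Cons_conv[of isTm \<alpha> X rest] by (cases X) auto
    have "filter isNt \<alpha> = filter isNt (takeWhile isTm \<alpha>) @ filter isNt (dropWhile isTm \<alpha>)"
      by (metis filter_append takeWhile_dropWhile_id)
    then have "filter isNt rest = []"
      using one_Nt Cons X by simp
    then have "map Tm (rright r) = rest"
      unfolding rright_def r snd_conv Cons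
      by (simp del: map_map) (rule map_Tm_unTm, auto simp: filter_empty_conv not_isTm_iff_isNt[symmetric])
    then show ?thesis
      by (simp add: rtgt_def r Cons X)
  qed
  then show ?thesis
    using left r by (metis snd_conv takeWhile_dropWhile_id)
qed

lemma rleft_rright_in_lists:
  assumes "cfg N \<Sigma> R S" "linear_grammar R" "r \<in> R"
  shows "rleft r \<in> lists \<Sigma>" "rright r \<in> lists \<Sigma>"
proof -
  have "r \<in> N \<times> lists (Nt ` N \<union> Tm ` \<Sigma>)"
    using assms(1,3) unfolding cfg_def by blast
  then have "set (snd r) \<subseteq> Nt ` N \<union> Tm ` \<Sigma>"
    by (auto simp: mem_Times_iff)
  moreover have "Tm ` set (rleft r) \<subseteq> set (snd r)" "Tm ` set (rright r) \<subseteq> set (snd r)"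
    by (subst rhs_eq_rleft_rtgt_rright[OF assms(2,3)]; auto)+
  ultimately show "rleft r \<in> lists \<Sigma>" "rright r \<in> lists \<Sigma>"
    by auto
qed

lemma is_path_append: "is_path R X (P @ Q) Z \<longleftrightarrow> (\<exists>Y. is_path R X P Y \<and> is_path R Y Q Z)"
  by (induct P arbitrary: X) auto

lemma is_path_target_unique: "is_path R X P Y \<Longrightarrow> is_path R X P Y' \<Longrightarrow> Y = Y'"
  by (induct P arbitrary: X) auto

lemma is_path_subset: "is_path R X P Y \<Longrightarrow> set P \<subseteq> R"
  by (induct P arbitrary: X) auto

definition left_word :: "('n, 't) rule list \<Rightarrow> 't list" where
  "left_word P = concat (map rleft P)"

definition right_word :: "('n, 't) rule list \<Rightarrow> 't list" where
  "right_word P = concat (rev (map rright P))"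

lemma left_word_simps [simp]:
  "left_word [] = []" "left_word (r # P) = rleft r @ left_word P"
  "left_word (P @ Q) = left_word P @ left_word Q"
  by (simp_all add: left_word_def)

lemma right_word_simps [simp]:
  "right_word [] = []" "right_word (r # P) = right_word P @ rright r"
  "right_word (P @ Q) = right_word Q @ right_word P"
  by (simp_all add: right_word_def)

lemma path_word_eq: "path_word P = left_word P @ right_word P"
  by (simp add: path_word_def left_word_def right_word_def)

lemma path_word_append: "path_word (P @ Q) = left_word P @ path_word Q @ right_word P"
  by (simp add: path_word_eq)

lemma left_right_word_in_lists:
  assumes "cfg N \<Sigma> R S" "linear_grammar R" "set P \<subseteq> R"
  shows "left_word P \<in> lists \<Sigma>" "right_word P \<in> lists \<Sigma>"
  using assms(3) by (induct P) (auto dest: rleft_rright_in_lists[OF assms(1,2)])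

lemma path_word_in_lists:
  "cfg N \<Sigma> R S \<Longrightarrow> linear_grammar R \<Longrightarrow> set P \<subseteq> R \<Longrightarrow> path_word P \<in> lists \<Sigma>"
  using left_right_word_in_lists by (fastforce simp: path_word_eq)

definition path_form :: "('n, 't) rule list \<Rightarrow> 'n option \<Rightarrow> ('n, 't) sym list" where
  "path_form P Y = map Tm (left_word P) @ vertex_syms Y @ map Tm (right_word P)"

lemma derives1_append_context: "derives1 R u v \<Longrightarrow> derives1 R (x @ u @ y) (x @ v @ y)"
  unfolding derives1_def by (metis append_assoc)

lemma derives_append_context:
  "(derives1 R)\<^sup>*\<^sup>* u v \<Longrightarrow> (derives1 R)\<^sup>*\<^sup>* (x @ u @ y) (x @ v @ y)"
  by (induct rule: rtranclp_induct) (auto intro: rtranclp.rtrancl_into_rtrancl derives1_append_context)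

lemma derives_path_form:
  assumes "linear_grammar R" "is_path R (Some A) P Y"
  shows "(derives1 R)\<^sup>*\<^sup>* [Nt A] (path_form P Y)"
  using assms(2)
proof (induct P arbitrary: A)
  case (Cons r P)
  then have r: "r \<in> R" "fst r = A" "is_path R (rtgt r) P Y"
    by auto
  have step: "derives1 R [Nt A] (snd r)"
    unfolding derives1_def using r by (intro exI[of _ "[]"] exI[of _ "[]"] exI[of _ A] exI[of _ "snd r"]) auto
  have "(derives1 R)\<^sup>*\<^sup>* (vertex_syms (rtgt r)) (path_form P Y)"
  proof (cases "rtgt r")
    case None
    then show ?thesis
      using r(3) by (cases P) (auto simp: path_form_def)
  qed (use Cons.hyps r(3) in simp)
  then have "(derives1 R)\<^sup>*\<^sup>* (snd r) (path_form (r # P) Y)"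
    using derives_append_context[of R "vertex_syms (rtgt r)" "path_form P Y" "map Tm (rleft r)"
        "map Tm (rright r)"] rhs_eq_rleft_rtgt_rright[OF assms(1) r(1)]
    by (simp add: path_form_def)
  with step show ?case
    by (rule converse_rtranclp_into_rtranclp)
qed (auto simp: path_form_def)

lemma path_form_split_unique:
  assumes "map Tm l @ [Nt B] @ map Tm r = x @ [Nt A] @ y"
  shows "x = map Tm l \<and> A = B \<and> y = map Tm r"
proof -
  have "filter isNt (x @ [Nt A] @ y) = [Nt B]"
    unfolding assms[symmetric] by (simp add: filter_empty_conv)
  then have "filter isNt x = []"
    by (cases "filter isNt x") auto
  then have x: "\<forall>z \<in> set x. isTm z"
    by (auto simp: filter_empty_conv not_isTm_iff_isNt[symmetric])
  have "length x = length l"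
  proof (rule ccontr)
    assume "length x \<noteq> length l"
    then consider "length x < length l" | "length l < length x"
      by linarith
    then show False
    proof cases
      case 1
      then show False
        using arg_cong[OF assms, of "\<lambda>s. s ! length x"] by (simp add: nth_append)
    next
      case 2
      then have "isTm (x ! length l)"
        using x by simp
      then show False
        using arg_cong[OF assms[symmetric], of "\<lambda>s. s ! length l"] 2 by (simp add: nth_append)
    qed
  qed
  then show ?thesis
    using assms by (auto simp: append_eq_append_conv)
qed

lemma derives_imp_path_form:
  assumes "linear_grammar R" "(derives1 R)\<^sup>*\<^sup>* [Nt S] v"
  shows "\<exists>P Y. is_path R (Some S) P Y \<and> v = path_form P Y"
  using assms(2)
proof (induct rule: rtranclp_induct)
  case base
  show ?case
    by (rule exI[of _ "[]"], rule exI[of _ "Some S"]) (simp add: path_form_def)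
next
  case (step v v')
  obtain P Y where P: "is_path R (Some S) P Y" "v = path_form P Y"
    using step.hyps(3) by blast
  obtain x y A \<alpha> where d: "v = x @ [Nt A] @ y" "v' = x @ \<alpha> @ y" "(A, \<alpha>) \<in> R"
    using step.hyps(2) by (auto simp: derives1_def)
  have "Nt A \<in> set (path_form P Y)"
    using d(1) unfolding P(2) by simp
  then obtain B where B: "Y = Some B"
    by (cases Y) (auto simp: path_form_def)
  have "x = map Tm (left_word P) \<and> A = B \<and> y = map Tm (right_word P)"
    using P(2) d(1) B by (intro path_form_split_unique) (simp add: path_form_def)
  then have "is_path R (Some S) (P @ [(A, \<alpha>)]) (rtgt (A, \<alpha>))"
    and "v' = path_form (P @ [(A, \<alpha>)]) (rtgt (A, \<alpha>))"
    using P B d rhs_eq_rleft_rtgt_rright[OF assms(1) d(3)]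
    by (auto simp: is_path_append path_form_def)
  then show ?case
    by blast
qed

lemma Lang_eq_path_words:
  fixes R :: "('n, 't) rule set"
  assumes "linear_grammar R"
  shows "Lang R S = {path_word P | P. is_path R (Some S) P None}"
proof (intro set_eqI iffI)
  fix w
  assume "w \<in> Lang R S"
  then obtain P Y where P: "is_path R (Some S) P Y" "map Tm w = path_form P Y"
    using derives_imp_path_form[OF assms] by (fastforce simp: Lang_def)
  moreover have "Y = None"
  proof (cases Y)
    case (Some B)
    then have "Nt B \<in> set (map Tm w)"
      using P(2) by (simp add: path_form_def)
    then show ?thesis
      by auto
  qed
  ultimately have "map Tm w = (map Tm (path_word P) :: ('n, 't) sym list)"
    by (simp add: path_form_def path_word_eq)
  then show "w \<in> {path_word P | P. is_path R (Some S) P None}"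
    using P(1) \<open>Y = None\<close> by (auto simp: inj_map_eq_map inj_def)
next
  fix w
  assume "w \<in> {path_word P | P. is_path R (Some S) P None}"
  then obtain P where "is_path R (Some S) P None" "w = path_word P"
    by blast
  then show "w \<in> Lang R S"
    using derives_path_form[OF assms, of S P None] by (simp add: Lang_def path_form_def path_word_eq)
qed

lemma path_less_irrefl: "irrefl lt \<Longrightarrow> \<not> path_less lt P P"
  by (simp add: path_less_def irrefl_def lexord_irreflexive)

lemma path_less_trans: "trans lt \<Longrightarrow> path_less lt P Q \<Longrightarrow> path_less lt Q T \<Longrightarrow> path_less lt P T"
  unfolding path_less_def by (auto intro: lexord_trans)

lemma path_less_append_context: "path_less lt Q T \<Longrightarrow> path_less lt (A @ Q @ B) (A @ T @ B)"
  unfolding path_less_def by (auto intro!: lexord_append_leftI lexord_sufI)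

lemma path_less_concat:
  assumes "trans lt" "list_all2 (\<lambda>Q T. Q = T \<or> path_less lt Q T) Qs Ts" "Qs \<noteq> Ts"
  shows "path_less lt (concat Qs) (concat Ts)"
  using assms(2,3)
proof (induct rule: list_all2_induct)
  case (Cons Q Qs T Ts)
  show ?case
  proof (cases "Q = T")
    case True
    then show ?thesis
      using Cons path_less_append_context[of lt "concat Qs" "concat Ts" Q "[]"] by simp
  next
    case False
    then have "path_less lt (Q @ concat Qs) (T @ concat Qs)"
      using Cons.hyps(1) path_less_append_context[of lt Q T "[]"] by simp
    moreover have "T @ concat Qs = T @ concat Ts \<or> path_less lt (T @ concat Qs) (T @ concat Ts)"
      using Cons.hyps(3) path_less_append_context[of lt "concat Qs" "concat Ts" T "[]"] by auto
    ultimately show ?thesis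
      using path_less_trans[OF assms(1)] by auto
  qed
qed simp

lemma path_less_imp_lenlex:
  assumes "path_less lt Q P" "set Q \<subseteq> R" "set P \<subseteq> R"
  shows "(Q, P) \<in> lenlex (lt \<inter> R \<times> R)"
proof (cases "length Q < length P")
  case False
  then have "length Q = length P" "(Q, P) \<in> lex lt"
    using assms(1) by (auto simp: path_less_def lexord_lex)
  then obtain xys x y xs ys where "Q = xys @ x # xs" "P = xys @ y # ys" "(x, y) \<in> lt"
    by (auto simp: lex_conv)
  moreover have "(x, y) \<in> lt \<inter> R \<times> R"
    using assms(2,3) calculation by auto
  ultimately show ?thesis
    using \<open>length Q = length P\<close> unfolding lenlex_conv lex_conv by blast
qed (simp add: lenlex_conv)

text \<open>The order lt need not be well-founded outside R; its restriction to the finite set R is.\<close>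
lemma path_less_induct [consumes 3, case_names less]:
  assumes "finite R" "strict_linear_order_on R lt" "set P \<subseteq> R"
    and "\<And>P. set P \<subseteq> R \<Longrightarrow> (\<And>Q. set Q \<subseteq> R \<Longrightarrow> path_less lt Q P \<Longrightarrow> \<Phi> Q) \<Longrightarrow> \<Phi> P"
  shows "\<Phi> P"
proof -
  have "finite (lt \<inter> R \<times> R)"
    using assms(1) by (simp add: finite_subset)
  moreover have "trans (lt \<inter> R \<times> R)" "irrefl (lt \<inter> R \<times> R)"
    using assms(2) by (auto simp: strict_linear_order_on_def trans_def irrefl_def)
  then have "acyclic (lt \<inter> R \<times> R)"
    by (simp add: acyclic_irrefl)
  ultimately have "wf (lenlex (lt \<inter> R \<times> R))"
    by (intro wf_lenlex) (simp add: wf_iff_acyclic_if_finite)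
  then show ?thesis
    using assms(3)
    by (induct P rule: wf_induct_rule) (use assms(4) path_less_imp_lenlex in blast)
qed

text \<open>join_path [P1, ..., Pn, Pn+1] [e1, ..., en] is the path P1 e1 ... Pn en Pn+1 from the
  definition of Phi.\<close>
definition join_path :: "('n, 't) rule list list \<Rightarrow> ('n, 't) rule list \<Rightarrow> ('n, 't) rule list" where
  "join_path Ps es = concat (map2 (\<lambda>p e. p @ [e]) (butlast Ps) es) @ last Ps"

definition optimal_decomposition ::
  "('n, 't) rule set \<Rightarrow> (('n, 't) rule \<times> ('n, 't) rule) set \<Rightarrow> ('n, 't) rule list list \<Rightarrow> ('n, 't) rule list \<Rightarrow> bool"
where
  "optimal_decomposition R lt Ps es \<longleftrightarrow> length Ps = Suc (length es) \<and>
     (\<forall>p \<in> set Ps. optimal R lt p) \<and> (\<forall>i < length es. \<not> optimal R lt (Ps ! i @ [es ! i]))"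

lemma Phi_eq:
  "Phi R lt S k = {path_word (join_path Ps es) | Ps es. length es \<le> k \<and>
     optimal_decomposition R lt Ps es \<and> is_path R (Some S) (join_path Ps es) None}"
  unfolding Phi_def optimal_decomposition_def join_path_def by blast

lemma optimal_Nil: "optimal R lt []"
  unfolding optimal_def path_less_def by (rule exI[of _ None], rule exI[of _ None]) simp

lemma join_path_Cons:
  "length Ps = Suc (length es) \<Longrightarrow> join_path (p # Ps) (e # es) = p @ [e] @ join_path Ps es"
  by (cases Ps) (simp_all add: join_path_def)

lemma join_path_append_last:
  "length Ps = Suc (length es) \<Longrightarrow> join_path (butlast Ps @ [last Ps @ [r]]) es = join_path Ps es @ [r]"
  by (simp add: join_path_def)

lemma join_path_append_edge:
  assumes "length Ps = Suc (length es)"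
  shows "join_path (Ps @ [[]]) (es @ [r]) = join_path Ps es @ [r]"
proof -
  have Ps: "Ps = butlast Ps @ [last Ps]"
    using assms by (cases Ps rule: rev_cases) auto
  have "zip Ps (es @ [r]) = zip (butlast Ps) es @ zip [last Ps] [r]"
    using assms by (subst (1) Ps) (rule zip_append, simp)
  then show ?thesis
    by (simp add: join_path_def)
qed

lemma optimal_decomposition_exists: "\<exists>Ps es. optimal_decomposition R lt Ps es \<and> join_path Ps es = P"
proof (induct P rule: rev_induct)
  case Nil
  show ?case
    by (rule exI[of _ "[[]]"], rule exI[of _ "[]"])
      (simp add: optimal_decomposition_def join_path_def optimal_Nil)
next
  case (snoc r P)
  then obtain Ps es where d: "optimal_decomposition R lt Ps es" "join_path Ps es = P"
    by blast
  then have len: "length Ps = Suc (length es)"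
    by (simp add: optimal_decomposition_def)
  show ?case
  proof (cases "optimal R lt (last Ps @ [r])")
    case True
    have "optimal_decomposition R lt (butlast Ps @ [last Ps @ [r]]) es"
      using d(1) True len
      by (auto simp: optimal_decomposition_def nth_append nth_butlast dest: in_set_butlastD)
    then show ?thesis
      using d(2) join_path_append_last[OF len] by blast
  next
    case False
    have "Ps \<noteq> []"
      using len by auto
    then have "Ps ! length es = last Ps"
      using len by (simp add: last_conv_nth)
    then have "optimal_decomposition R lt (Ps @ [[]]) (es @ [r])"
      using d(1) False len optimal_Nil
      by (auto simp: optimal_decomposition_def nth_append less_Suc_eq)
    then show ?thesis
      using d(2) join_path_append_edge[OF len] by blast
  qed
qed

lemma optimal_decomposition_four_edges:
  assumes "optimal_decomposition R lt Ps es" "4 \<le> length es"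
  obtains S0 S1 S2 S3 T where "join_path Ps es = S0 @ S1 @ S2 @ S3 @ T"
    "\<not> optimal R lt S0" "\<not> optimal R lt S1" "\<not> optimal R lt S2" "\<not> optimal R lt S3"
proof -
  obtain e0 e1 e2 e3 es' where es: "es = e0 # e1 # e2 # e3 # es'"
    using assms(2) by (auto simp: numeral_eq_Suc Suc_le_length_iff)
  moreover have "length Ps = Suc (length es)"
    using assms(1) by (simp add: optimal_decomposition_def)
  ultimately obtain p0 p1 p2 p3 Ps' where Ps: "Ps = p0 # p1 # p2 # p3 # Ps'"
    and Ps': "length Ps' = Suc (length es')"
    by (auto simp: length_Suc_conv)
  have nonopt: "\<not> optimal R lt (Ps ! i @ [es ! i])" if "i < 4" for i
    using assms(1) that es by (simp add: optimal_decomposition_def)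
  have "\<not> optimal R lt (p0 @ [e0])" "\<not> optimal R lt (p1 @ [e1])"
    "\<not> optimal R lt (p2 @ [e2])" "\<not> optimal R lt (p3 @ [e3])"
    using nonopt[of 0] nonopt[of 1] nonopt[of 2] nonopt[of 3] by (simp_all add: Ps es)
  moreover have "join_path Ps es = (p0 @ [e0]) @ (p1 @ [e1]) @ (p2 @ [e2]) @ (p3 @ [e3]) @ join_path Ps' es'"
    using Ps' by (simp add: Ps es join_path_Cons)
  ultimately show ?thesis
    using that by blast
qed

section \<open>The test set\<close>

lemma shorter_path_if_not_optimal:
  "is_path R X p Y \<Longrightarrow> \<not> optimal R lt p \<Longrightarrow> \<exists>Q. is_path R X Q Y \<and> path_less lt Q p"
  unfolding optimal_def by blast

text \<open>Replacing any nonempty subset of four non-optimal segments by shorter parallel paths gives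
  fifteen smaller accepting paths; the cube lemma transfers agreement on them to the path itself.\<close>
lemma morphisms_agree_by_shortcuts:
  fixes f g :: "'t list \<Rightarrow> 'g list" and R :: "('n, 't) rule set"
  assumes "cfg N \<Sigma> R S" "linear_grammar R" "trans lt" "irrefl lt"
    and "morphism_on \<Sigma> f" "morphism_on \<Sigma> g"
    and path: "is_path R X (S0 @ S1 @ S2 @ S3 @ T) None"
    and not_optimal: "\<not> optimal R lt S0" "\<not> optimal R lt S1" "\<not> optimal R lt S2" "\<not> optimal R lt S3"
    and shorter: "\<And>Q. is_path R X Q None \<Longrightarrow> path_less lt Q (S0 @ S1 @ S2 @ S3 @ T) \<Longrightarrow>
      f (path_word Q) = g (path_word Q)"
  shows "f (path_word (S0 @ S1 @ S2 @ S3 @ T)) = g (path_word (S0 @ S1 @ S2 @ S3 @ T))"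
proof -
  obtain V1 V2 V3 V4 where V: "is_path R X S0 V1" "is_path R V1 S1 V2" "is_path R V2 S2 V3"
    "is_path R V3 S3 V4" "is_path R V4 T None"
    using path by (auto simp: is_path_append)
  obtain Q0 Q1 Q2 Q3
    where Q: "is_path R X Q0 V1" "is_path R V1 Q1 V2" "is_path R V2 Q2 V3" "is_path R V3 Q3 V4"
    and less: "path_less lt Q0 S0" "path_less lt Q1 S1" "path_less lt Q2 S2" "path_less lt Q3 S3"
    using shorter_path_if_not_optimal[OF V(1) not_optimal(1)] shorter_path_if_not_optimal[OF V(2) not_optimal(2)]
      shorter_path_if_not_optimal[OF V(3) not_optimal(3)] shorter_path_if_not_optimal[OF V(4) not_optimal(4)]
    by blast
  define A where "A a0 a1 a2 a3 =
    [if a0 then Q0 else S0, if a1 then Q1 else S1, if a2 then Q2 else S2, if a3 then Q3 else S3, T]"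
    for a0 a1 a2 a3
  have A_path: "is_path R X (concat (A a0 a1 a2 a3)) None" for a0 a1 a2 a3
    using V Q by (auto simp: A_def is_path_append)
  have words: "{left_word P, right_word P, path_word P} \<subseteq> lists \<Sigma>" if "set P \<subseteq> R" for P
    using left_right_word_in_lists[OF assms(1,2) that] path_word_in_lists[OF assms(1,2) that] by simp
  have segments: "set Q0 \<subseteq> R" "set Q1 \<subseteq> R" "set Q2 \<subseteq> R" "set Q3 \<subseteq> R"
    "set S0 \<subseteq> R" "set S1 \<subseteq> R" "set S2 \<subseteq> R" "set S3 \<subseteq> R" "set T \<subseteq> R"
    using Q V by (auto dest: is_path_subset)
  have word_A: "path_word (concat (A a0 a1 a2 a3)) =
      left_word (if a0 then Q0 else S0) @ left_word (if a1 then Q1 else S1)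
      @ left_word (if a2 then Q2 else S2) @ path_word ((if a3 then Q3 else S3) @ T)
      @ right_word (if a2 then Q2 else S2) @ right_word (if a1 then Q1 else S1)
      @ right_word (if a0 then Q0 else S0)" for a0 a1 a2 a3
    by (simp add: A_def path_word_append)
  have agree: "f (path_word (concat (A a0 a1 a2 a3))) = g (path_word (concat (A a0 a1 a2 a3)))"
    if "a0 \<or> a1 \<or> a2 \<or> a3" for a0 a1 a2 a3
  proof (rule shorter[OF A_path])
    have "Q0 \<noteq> S0" "Q1 \<noteq> S1" "Q2 \<noteq> S2" "Q3 \<noteq> S3"
      using less path_less_irrefl[OF assms(4)] by auto
    then have "A a0 a1 a2 a3 \<noteq> A False False False False"
      using that by (auto simp: A_def)
    moreover have "list_all2 (\<lambda>Q T. Q = T \<or> path_less lt Q T) (A a0 a1 a2 a3) (A False False False False)"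
      using less by (simp add: A_def)
    ultimately have "path_less lt (concat (A a0 a1 a2 a3)) (concat (A False False False False))"
      by (rule path_less_concat[OF assms(3), rotated])
    then show "path_less lt (concat (A a0 a1 a2 a3)) (S0 @ S1 @ S2 @ S3 @ T)"
      by (simp add: A_def)
  qed
  have "f (path_word (concat (A False False False False))) = g (path_word (concat (A False False False False)))"
    unfolding word_A
  proof (rule morphisms_cube[OF assms(5,6)], goal_cases)
    case (1 b)
    show ?case
      using words segments by (cases b) auto
  next
    case (2 a0 a1 a2 a3)
    then show ?case
      using agree[of a0 a1 a2 a3] unfolding word_A by simp
  qed
  then show ?thesis
    by (simp add: A_def)
qed

lemma morphisms_agree_on_accepting_paths:
  fixes f g :: "'t list \<Rightarrow> 'g list" and R :: "('n, 't) rule set"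
  assumes "cfg N \<Sigma> R S" "linear_grammar R" "strict_linear_order_on R lt"
    and "morphism_on \<Sigma> f" "morphism_on \<Sigma> g"
    and agree: "\<forall>w \<in> Phi R lt S 3. f w = g w"
    and "is_path R (Some S) P None"
  shows "f (path_word P) = g (path_word P)"
proof -
  have "finite R"
    using assms(1) by (simp add: cfg_def)
  moreover note assms(3)
  moreover have "set P \<subseteq> R"
    using assms(7) by (rule is_path_subset)
  ultimately show ?thesis
    using assms(7)
  proof (induct P rule: path_less_induct)
    case (less P)
    have shorter: "f (path_word Q) = g (path_word Q)"
      if "is_path R (Some S) Q None" "path_less lt Q P" for Q
      using less.hyps(2)[OF is_path_subset[OF that(1)] that(2)] that(1) by blast
    obtain Ps es where d: "optimal_decomposition R lt Ps es" "join_path Ps es = P"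
      using optimal_decomposition_exists by blast
    show ?case
    proof (cases "length es \<le> 3")
      case True
      then have "path_word P \<in> Phi R lt S 3"
        using d less.prems by (auto simp: Phi_eq)
      then show ?thesis
        using agree by blast
    next
      case False
      then have "4 \<le> length es"
        by simp
      then obtain S0 S1 S2 S3 T where "P = S0 @ S1 @ S2 @ S3 @ T"
        and "\<not> optimal R lt S0" "\<not> optimal R lt S1" "\<not> optimal R lt S2" "\<not> optimal R lt S3"
        using optimal_decomposition_four_edges[OF d(1)] d(2) by metis
      moreover have "trans lt" "irrefl lt"
        using assms(3) by (simp_all add: strict_linear_order_on_def)
      ultimately show ?thesis
        using morphisms_agree_by_shortcuts[OF assms(1,2) _ _ assms(4,5)] less.prems
          shorter by blast
    qed
  qed
qed

lemma test_set_Phi_3: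
  fixes R :: "('n, 't) rule set"
  assumes "cfg N \<Sigma> R S" "linear_grammar R" "strict_linear_order_on R lt"
  shows "test_set TYPE('g) \<Sigma> (Phi R lt S 3) (Lang R S)"
  unfolding test_set_def Lang_eq_path_words[OF assms(2)]
  using morphisms_agree_on_accepting_paths[OF assms] by (auto simp: Phi_def)

section \<open>Counting\<close>

lemma lexord_total_on_lists:
  assumes "total_on R lt" "set xs \<subseteq> R" "set ys \<subseteq> R" "length xs = length ys" "xs \<noteq> ys"
  shows "(xs, ys) \<in> lexord lt \<or> (ys, xs) \<in> lexord lt"
proof -
  obtain pre x xs' y ys' where "x \<noteq> y" and xs: "xs = pre @ [x] @ xs'" and ys: "ys = pre @ [y] @ ys'"
    using same_length_different[OF assms(5,4)] by blast
  then have "(x, y) \<in> lt \<or> (y, x) \<in> lt"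
    using assms(1-3) by (auto simp: total_on_def)
  then show ?thesis
    by (auto simp: xs ys lexord_append_left_rightI)
qed

lemma optimal_not_path_less:
  assumes "optimal R lt p" "is_path R X p Y" "is_path R X P Y"
  shows "\<not> path_less lt P p"
proof (cases p)
  case Nil
  then show ?thesis
    by (simp add: path_less_def)
next
  case (Cons r p')
  obtain X' Y' where "is_path R X' p Y'" "\<forall>P. is_path R X' P Y' \<longrightarrow> \<not> path_less lt P p"
    using assms(1) by (auto simp: optimal_def)
  moreover have "X' = X"
    using calculation(1) assms(2) Cons by simp
  moreover have "Y' = Y"
    using calculation assms(2) by (simp add: is_path_target_unique)
  ultimately show ?thesis
    using assms(3) by blast
qed

lemma optimal_path_unique:
  assumes "total_on R lt" "is_path R X p Y" "is_path R X p' Y" "optimal R lt p" "optimal R lt p'"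
  shows "p = p'"
proof (rule ccontr)
  assume "p \<noteq> p'"
  moreover have "\<not> path_less lt p' p" "\<not> path_less lt p p'"
    using optimal_not_path_less assms(2-5) by blast+
  then have "length p = length p'"
    by (auto simp: path_less_def)
  ultimately show False
    using lexord_total_on_lists[OF assms(1) is_path_subset[OF assms(2)] is_path_subset[OF assms(3)]]
      \<open>\<not> path_less lt p' p\<close> \<open>\<not> path_less lt p p'\<close> by (auto simp: path_less_def)
qed

lemma join_path_unique:
  assumes "total_on R lt"
  shows "length Ps = Suc (length es) \<Longrightarrow> (\<forall>p \<in> set Ps. optimal R lt p) \<Longrightarrow> is_path R X (join_path Ps es) None \<Longrightarrow>
    length Ps' = Suc (length es) \<Longrightarrow> (\<forall>p \<in> set Ps'. optimal R lt p) \<Longrightarrow> is_path R X (join_path Ps' es) None \<Longrightarrow>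
    join_path Ps es = join_path Ps' es"
proof (induct es arbitrary: X Ps Ps')
  case Nil
  then obtain p p' where "Ps = [p]" "Ps' = [p']"
    by (auto simp: length_Suc_conv)
  then show ?case
    using Nil optimal_path_unique[OF assms, of X p None p'] by (simp add: join_path_def)
next
  case (Cons e es)
  obtain p Ps1 p' Ps1' where Ps: "Ps = p # Ps1" "Ps' = p' # Ps1'"
    using Cons.prems(1,4) by (auto simp: length_Suc_conv)
  then have len: "length Ps1 = Suc (length es)" "length Ps1' = Suc (length es)"
    using Cons.prems(1,4) by simp_all
  then have join: "join_path Ps (e # es) = p @ [e] @ join_path Ps1 es"
    "join_path Ps' (e # es) = p' @ [e] @ join_path Ps1' es"
    using Ps by (auto simp: join_path_Cons)
  obtain Y Y' where "is_path R X p Y" "is_path R Y ([e] @ join_path Ps1 es) None"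
    "is_path R X p' Y'" "is_path R Y' ([e] @ join_path Ps1' es) None"
    using Cons.prems(3,6) unfolding join by (auto simp: is_path_append)
  moreover from calculation have "Y = Some (fst e)" "Y' = Some (fst e)"
    by simp_all
  ultimately have "p = p'" "is_path R (rtgt e) (join_path Ps1 es) None"
    "is_path R (rtgt e) (join_path Ps1' es) None"
    using optimal_path_unique[OF assms] Cons.prems(2,5) Ps by auto
  moreover have "join_path Ps1 es = join_path Ps1' es"
    using Cons.hyps calculation(2,3) len Cons.prems(2,5) Ps by auto
  ultimately show ?case
    using join by simp
qed

lemma set_edges_subset_join_path:
  "length Ps = Suc (length es) \<Longrightarrow> set es \<subseteq> set (join_path Ps es)"
proof (induct es arbitrary: Ps)
  case (Cons e es)
  then obtain p Ps' where "Ps = p # Ps'" "length Ps' = Suc (length es)"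
    by (auto simp: length_Suc_conv)
  with Cons.hyps show ?case
    by (auto simp: join_path_Cons)
qed simp

text \<open>By uniqueness of optimal paths a word of Phi k is determined by its at most k connecting
  edges.\<close>
lemma card_Phi_le:
  fixes R :: "('n, 't) rule set"
  assumes "finite R" "total_on R lt"
  shows "finite (Phi R lt S k) \<and> card (Phi R lt S k) \<le> (\<Sum>i = 0..k. card R ^ i)"
proof -
  define E where "E = {es. set es \<subseteq> R \<and> length es \<le> k}"
  define C where "C es Ps \<longleftrightarrow> optimal_decomposition R lt Ps es \<and> is_path R (Some S) (join_path Ps es) None"
    for es Ps
  define word where "word es = path_word (join_path (SOME Ps. C es Ps) es)" for es
  have "Phi R lt S k \<subseteq> word ` E"
  proof
    fix w
    assume "w \<in> Phi R lt S k"
    then obtain Ps es where w: "w = path_word (join_path Ps es)" "length es \<le> k" "C es Ps"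
      unfolding Phi_eq C_def by blast
    define Ps0 where "Ps0 = (SOME Ps. C es Ps)"
    have "C es Ps0"
      using w(3) unfolding Ps0_def by (rule someI)
    have "join_path Ps0 es = join_path Ps es"
      by (rule join_path_unique[OF assms(2), where X = "Some S"])
        (use \<open>C es Ps0\<close> w(3) in \<open>simp_all add: C_def optimal_decomposition_def\<close>)
    then have "w = word es"
      by (simp add: w(1) word_def Ps0_def)
    moreover have "set es \<subseteq> set (join_path Ps es)"
      using w(3) by (intro set_edges_subset_join_path) (simp add: C_def optimal_decomposition_def)
    then have "es \<in> E"
      using w(2,3) is_path_subset unfolding E_def C_def by blast
    ultimately show "w \<in> word ` E"
      by blast
  qed
  moreover have E: "E = (\<Union>i \<in> {0..k}. {es. set es \<subseteq> R \<and> length es = i})"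
    by (auto simp: E_def)
  have "finite E"
    unfolding E by (simp add: finite_lists_length_eq[OF assms(1)])
  moreover have "card E \<le> (\<Sum>i = 0..k. card R ^ i)"
    unfolding E using card_UN_le[of "{0..k}" "\<lambda>i. {es. set es \<subseteq> R \<and> length es = i}"]
    by (simp add: card_lists_length_eq[OF assms(1)])
  ultimately show ?thesis
    using card_image_le[of E word] card_mono[of "word ` E" "Phi R lt S k"]
      finite_subset[of "Phi R lt S k" "word ` E"] by simp
qed

theorem mainTheorem2:
  fixes N :: "'n set" and \<Sigma> :: "'t set" and R :: "('n, 't) rule set" and S :: 'n
    and lt :: "(('n, 't) rule \<times> ('n, 't) rule) set"
  assumes "cfg N \<Sigma> R S"
    and "linear_grammar R"
    and "strict_linear_order_on R lt"
  shows "test_set TYPE('g) \<Sigma> (Phi R lt S 3) (Lang R S)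
       \<and> (\<forall>k. finite (Phi R lt S k) \<and> card (Phi R lt S k) \<le> (\<Sum>i = 0..k. card R ^ i))"
proof
  show "test_set TYPE('g) \<Sigma> (Phi R lt S 3) (Lang R S)"
    using assms by (rule test_set_Phi_3)
  have "finite R" "total_on R lt"
    using assms(1,3) by (simp_all add: cfg_def strict_linear_order_on_def)
  then show "\<forall>k. finite (Phi R lt S k) \<and> card (Phi R lt S k) \<le> (\<Sum>i = 0..k. card R ^ i)"
    by (intro allI card_Phi_le)
qed

end
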